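(* Assume the model (M.2) with $M_0>0$ and the sub-Gaussian condition (A.4) described in the context, and let Algorithm 2 be applied to $X_1,\ldots,X_N$. (i) For $k\in\{1,\ldots,M_0\}$ let $q_k(N)=250D\log N/(c_0|\mu_k-\mu_{k+1}|^2)$, and let $F_{k,N}$ be the event that there exist integers $1\le n_1<n_2<N_k$ and $1\le n_3\le N_{k+1}$ such that $\{X^{(k)}_n:n=n_1+1,\ldots,n_2\}$ and $\{X^{(k)}_n:n=n_2+1,\ldots,N_k\}\cup\{X^{(k+1)}_n:n=1,\ldots,n_3\}$ are two detected segments and $\min\{N_k-n_2,n_3\}>q_k(N)$. Then $\Pr(\limsup_{N\to\infty}F_{k,N})=0$. (ii) For $k\in\{2,\ldots,M_0+1\}$ let $\tilde q_k(N)=250D\log N/(c_0|\mu_{k-1}-\mu_k|^2)$, and let $\tilde F_{k,N}$ be the event that there exist integers $1\le n_1<n_2<N_k$ and $1\le n_3\le N_{k-1}$ such that $\{X^{(k-1)}_n:n=N_{k-1}-n_3+1,\ldots,N_{k-1}\}\cup\{X^{(k)}_n:n=1,\ldots,n_1\}$ and $\{X^{(k)}_n:n=n_1+1,\ldots,n_2\}$ are two detected segments and $\min\{n_1,n_3\}>\tilde q_k(N)$. Then $\Pr(\limsup_{N\to\infty}\tilde F_{k,N})=0$.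
   Context: Model (M.2): for each sample size $N$ one observes independent random vectors $X_1,\ldots,X_N\in\mathbb{R}^D$ ($D\in\mathbb{N}$ fixed). There are $M_0\ge 0$ (fixed) change points $0=L_0<L_1<\cdots<L_{M_0}<L_{M_0+1}=N$ (depending on $N$), with segment sizes $N_k=L_k-L_{k-1}$, $N_k\to\infty$; for each $k$, $X_{L_{k-1}+1},\ldots,X_{L_k}$ are i.i.d. with distribution $\mathcal{G}_k$ with mean $\mu_k$ and finite covariance; $\mu_k\neq\mu_{k+1}$. Write $X^{(k)}_n=X_{L_{k-1}+n}$, $n=1,\ldots,N_k$. (A.4): there is $c_0>0$ such that for every $k$, coordinate $d$, $n\ge1$ and $a>0$, the mean $\bar Z$ of $n$ i.i.d. copies of the $d$-th marginal of $\mathcal{G}_k$ satisfies $\Pr(|\bar Z-E\bar Z|\ge a)\le2e^{-c_0a^2n}$. Quadratic loss: $\mathrm{Loss}_q(x_a,\ldots,x_b)=\sum_{n=a}^b|x_n-\bar x|^2$, $\bar x$ the sample mean, $|\cdot|$ Euclidean norm. Algorithm 2 (inputs $M_{\max}\ge1$, penalty $f(N)>0$, minimal segment size $\beta(N)$): for $k=0,1,\ldots,M_{\max}$ compute $\hat e_k=\min\sum_{j=1}^{k+1}\mathrm{Loss}_q(x_{\ell_{j-1}+1},\ldots,x_{\ell_j})$ over $0=\ell_0<\ell_1<\cdots<\ell_{k+1}=N$ with a minimizer; if its smallest segment has size $<\beta(N)$, set $M=k-1$ and stop (else $M=M_{\max}$). Output $\hat M=\arg\min_{0\le k\le M}(\hat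 e_k+kf(N))$ and the change points $\hat\ell_1<\cdots<\hat\ell_{\hat M}$ of the minimizer for $k=\hat M$. The detected segments are the blocks $\{X_n:n=\hat\ell_{j-1}+1,\ldots,\hat\ell_j\}$, $j=1,\ldots,\hat M+1$ ($\hat\ell_0=0,\hat\ell_{\hat M+1}=N$); "two detected segments" means two neighboring ones, in the order listed. $\limsup_N E_N$ is the event that $E_N$ occurs for infinitely many $N$. *)

theory Defs
  imports "HOL-Probability.Probability"
begin

text \<open>Segmentations of the index range 1..N into k+1 blocks are encoded by the
  list ls = [l_1,...,l_k] of interior change points; the boundaries are
  0 = l_0 < l_1 < ... < l_k < l_(k+1) = N, and block j (j = 1..k+1) is
  the index range l_(j-1)+1 .. l_j.\<close>

definition seg_bounds :: "nat \<Rightarrow> nat list \<Rightarrow> nat list" where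
  "seg_bounds N ls = 0 # ls @ [N]"

definition valid_seg :: "nat \<Rightarrow> nat \<Rightarrow> nat list \<Rightarrow> bool" where
  "valid_seg N k ls \<longleftrightarrow> length ls = k \<and> sorted_wrt (<) (seg_bounds N ls)"

definition loss_q :: "(nat \<Rightarrow> 'a::real_normed_vector) \<Rightarrow> nat \<Rightarrow> nat \<Rightarrow> real" where
  "loss_q x a b =
     (let m = (1 / real (b + 1 - a)) *\<^sub>R (\<Sum>n=a..b. x n)
      in \<Sum>n=a..b. (norm (x n - m))\<^sup>2)"

definition seg_cost :: "(nat \<Rightarrow> 'a::real_normed_vector) \<Rightarrow> nat \<Rightarrow> nat list \<Rightarrow> real" where
  "seg_cost x N ls =
     (let b = seg_bounds N ls in \<Sum>j<length ls + 1. loss_q x (b!j + 1) (b!(j+1)))"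

definition is_minimizer :: "(nat \<Rightarrow> 'a::real_normed_vector) \<Rightarrow> nat \<Rightarrow> nat \<Rightarrow> nat list \<Rightarrow> bool" where
  "is_minimizer x N k ls \<longleftrightarrow>
     valid_seg N k ls \<and> (\<forall>ls'. valid_seg N k ls' \<longrightarrow> seg_cost x N ls \<le> seg_cost x N ls')"

definition min_seg_size :: "nat \<Rightarrow> nat list \<Rightarrow> nat" where
  "min_seg_size N ls =
     (let b = seg_bounds N ls in Min {b!(j+1) - b!j | j. j < length ls + 1})"

text \<open>alg_output Mmax f beta x N ls: ls is the list of change points output by
  Algorithm 2 on data x_1..x_N, for some choice s k of the minimizers computed for
  k = 0..Mmax and some choice of the argmin (ties).  If the algorithm stops already
  at k = 0 (so M = -1), no change point is output (ls = []).\<close>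
definition alg_output ::
  "nat \<Rightarrow> (nat \<Rightarrow> real) \<Rightarrow> (nat \<Rightarrow> real) \<Rightarrow> (nat \<Rightarrow> 'a::real_normed_vector) \<Rightarrow> nat \<Rightarrow> nat list \<Rightarrow> bool" where
  "alg_output Mmax f \<beta> x N ls \<longleftrightarrow>
     (\<exists>s. (\<forall>k\<le>Mmax. is_minimizer x N k (s k)) \<and>
        (let stop = {k. k \<le> Mmax \<and> real (min_seg_size N (s k)) < \<beta> N} in
         if stop \<noteq> {} \<and> Min stop = 0 then ls = []
         else (let M = (if stop = {} then Mmax else Min stop - 1) in
               \<exists>Mh. is_arg_min (\<lambda>k. seg_cost x N (s k) + real k * f N) (\<lambda>k. k \<le> M) Mh
                     \<and> ls = s Mh)))"

text \<open>Event F_{k,N} of part (i), for the change points L = L_N(.) and threshold q,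
  given the output change points ls (boundaries b).  Detected blocks j and j+1 are
  (b!(j-1), b!j] and (b!j, b!(j+1)].\<close>
definition event_F :: "(nat \<Rightarrow> nat) \<Rightarrow> nat \<Rightarrow> real \<Rightarrow> nat \<Rightarrow> nat list \<Rightarrow> bool" where
  "event_F L k q N ls \<longleftrightarrow>
     (let b = seg_bounds N ls in
      \<exists>j n1 n2 n3. 1 \<le> j \<and> j \<le> length ls \<and>
        1 \<le> n1 \<and> n1 < n2 \<and> n2 < L k - L (k-1) \<and> 1 \<le> n3 \<and> n3 \<le> L (k+1) - L k \<and>
        b!(j-1) = L (k-1) + n1 \<and> b!j = L (k-1) + n2 \<and> b!(j+1) = L k + n3 \<and>
        real (min (L k - L (k-1) - n2) n3) > q)"

definition event_F' :: "(nat \<Rightarrow> nat) \<Rightarrow> nat \<Rightarrow> real \<Rightarrow> nat \<Rightarrow> nat list \<Rightarrow> bool" where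
  "event_F' L k q N ls \<longleftrightarrow>
     (let b = seg_bounds N ls in
      \<exists>j n1 n2 n3. 1 \<le> j \<and> j \<le> length ls \<and>
        1 \<le> n1 \<and> n1 < n2 \<and> n2 < L k - L (k-1) \<and> 1 \<le> n3 \<and> n3 \<le> L (k-1) - L (k-2) \<and>
        n3 \<le> L (k-1) \<and>
        b!(j-1) = L (k-1) - n3 \<and> b!j = L (k-1) + n1 \<and> b!(j+1) = L (k-1) + n2 \<and>
        real (min n1 n3) > q)"

end

theory Submission
  imports Defs
begin

text \<open>On an event of probability one, for all large N every block of observations lying inside
  a single stationary segment k has a sample mean within distance sqrt(4 D ln N / (c0 n))
  of mu_k: the sub-Gaussian bound with this radius has tail 2 N^(-4) per coordinate, a union
  bound over the O(N^2) blocks gives a summable sequence, and Borel--Cantelli applies.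

  On this event the result is deterministic. Let gain(u,v,w) be the decrease of the quadratic
  loss of the block (u,w] when it is split at v, and \<Lambda> = D ln N / c0. Splitting inside a
  stationary segment gains at most 8\<Lambda>, whereas splitting exactly at a change point with both
  parts longer than 250\<Lambda>/|mu_k - mu_(k+1)|^2 gains more than 8\<Lambda>. In the situation of
  part (i), with detected boundaries u < v < w and the change point t between v and w, moving v to t changes
  the cost by gain(u,v,t) - gain(v,t,w) < 0, contradicting the minimality of the detected
  segmentation; part (ii) is the mirror image.\<close>

definition block_mean :: "(nat \<Rightarrow> 'a::real_normed_vector) \<Rightarrow> nat \<Rightarrow> nat \<Rightarrow> 'a" where
  "block_mean x a b = (1 / real (b + 1 - a)) *\<^sub>R (\<Sum>n=a..b. x n)"

lemma loss_q_block_mean: "loss_q x a b = (\<Sum>n=a..b. (norm (x n - block_mean x a b))\<^sup>2)"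
  by (simp add: loss_q_def block_mean_def Let_def)

lemma sum_dist_sq_eq_loss_q:
  fixes x :: "nat \<Rightarrow> 'a::real_inner"
  assumes "a \<le> b"
  shows "(\<Sum>n=a..b. (norm (x n - c))\<^sup>2) = loss_q x a b + real (b+1-a) * (norm (block_mean x a b - c))\<^sup>2"
proof -
  let ?m = "block_mean x a b"
  have sum_eq: "(\<Sum>n=a..b. x n) = real (b+1-a) *\<^sub>R ?m"
    using assms by (simp add: block_mean_def)
  have "(\<Sum>n=a..b. (norm (x n - c))\<^sup>2)
      = (\<Sum>n=a..b. (norm (x n - ?m))\<^sup>2 + 2 * inner (x n - ?m) (?m - c) + (norm (?m - c))\<^sup>2)"
  proof (rule sum.cong[OF refl])
    fix n
    have e: "x n - c = (x n - ?m) + (?m - c)" by simp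
    show "(norm (x n - c))\<^sup>2 = (norm (x n - ?m))\<^sup>2 + 2 * inner (x n - ?m) (?m - c) + (norm (?m - c))\<^sup>2"
      unfolding e using dot_norm[of "x n - ?m" "?m - c"] by (simp only: field_simps)
  qed
  also have "\<dots> = (\<Sum>n=a..b. (norm (x n - ?m))\<^sup>2) + 2 * inner (\<Sum>n=a..b. x n - ?m) (?m - c)
      + real (b+1-a) * (norm (?m - c))\<^sup>2"
    by (simp only: sum.distrib sum_distrib_left[symmetric] inner_sum_left[symmetric] sum_constant) simp
  also have "(\<Sum>n=a..b. x n - ?m) = 0"
    by (simp add: sum_subtractf sum_eq sum_constant_scaleR)
  finally show ?thesis by (simp add: loss_q_block_mean)
qed

lemma sum_split_at:
  fixes g :: "nat \<Rightarrow> 'a::comm_monoid_add"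
  assumes "u \<le> v" "v \<le> w"
  shows "(\<Sum>n=u+1..w. g n) = (\<Sum>n=u+1..v. g n) + (\<Sum>n=v+1..w. g n)"
  using sum.ub_add_nat[of "u+1" v g "w-v"] assms by simp

definition split_gain :: "(nat \<Rightarrow> 'a::real_normed_vector) \<Rightarrow> nat \<Rightarrow> nat \<Rightarrow> nat \<Rightarrow> real" where
  "split_gain x u v w = loss_q x (u+1) w - loss_q x (u+1) v - loss_q x (v+1) w"

lemma split_gain_le:
  fixes x :: "nat \<Rightarrow> 'a::real_inner"
  assumes "u < v" "v < w"
  shows "split_gain x u v w
    \<le> real (v-u) * (norm (block_mean x (u+1) v - c))\<^sup>2 + real (w-v) * (norm (block_mean x (v+1) w - c))\<^sup>2"
proof -
  have "loss_q x (u+1) w \<le> (\<Sum>n=u+1..w. (norm (x n - c))\<^sup>2)"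
    using sum_dist_sq_eq_loss_q[of "u+1" w x c] assms by simp
  also have "\<dots> = (\<Sum>n=u+1..v. (norm (x n - c))\<^sup>2) + (\<Sum>n=v+1..w. (norm (x n - c))\<^sup>2)"
    using assms by (intro sum_split_at) auto
  also have "\<dots> = loss_q x (u+1) v + real (v-u) * (norm (block_mean x (u+1) v - c))\<^sup>2
      + (loss_q x (v+1) w + real (w-v) * (norm (block_mean x (v+1) w - c))\<^sup>2)"
    using sum_dist_sq_eq_loss_q[of "u+1" v x c] sum_dist_sq_eq_loss_q[of "v+1" w x c] assms by simp
  finally show ?thesis by (simp add: split_gain_def)
qed

lemma split_gain_ge:
  fixes x :: "nat \<Rightarrow> 'a::real_inner"
  assumes "u < v" "v < w"
  shows "split_gain x u v w \<ge> real (min (v-u) (w-v)) / 2 * (norm (block_mean x (u+1) v - block_mean x (v+1) w))\<^sup>2"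
proof -
  let ?m = "block_mean x (u+1) w" and ?m1 = "block_mean x (u+1) v" and ?m2 = "block_mean x (v+1) w"
  let ?mn = "real (min (v-u) (w-v))"
  have "loss_q x (u+1) w = (\<Sum>n=u+1..v. (norm (x n - ?m))\<^sup>2) + (\<Sum>n=v+1..w. (norm (x n - ?m))\<^sup>2)"
    unfolding loss_q_block_mean using assms by (intro sum_split_at) auto
  also have "\<dots> = loss_q x (u+1) v + real (v-u) * (norm (?m1 - ?m))\<^sup>2
      + (loss_q x (v+1) w + real (w-v) * (norm (?m2 - ?m))\<^sup>2)"
    using sum_dist_sq_eq_loss_q[of "u+1" v x ?m] sum_dist_sq_eq_loss_q[of "v+1" w x ?m] assms by simp
  finally have gain: "split_gain x u v w = real (v-u) * (norm (?m1 - ?m))\<^sup>2 + real (w-v) * (norm (?m2 - ?m))\<^sup>2"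
    by (simp add: split_gain_def)
  have "(norm (?m1 - ?m2))\<^sup>2 \<le> (norm (?m1 - ?m) + norm (?m2 - ?m))\<^sup>2"
    using norm_triangle_ineq4[of "?m1 - ?m" "?m2 - ?m"] by (simp add: power_mono)
  also have "\<dots> \<le> 2 * ((norm (?m1 - ?m))\<^sup>2 + (norm (?m2 - ?m))\<^sup>2)"
    using zero_le_power2[of "norm (?m1 - ?m) - norm (?m2 - ?m)"] by (simp add: power2_eq_square algebra_simps)
  finally have half: "(norm (?m1 - ?m2))\<^sup>2 / 2 \<le> (norm (?m1 - ?m))\<^sup>2 + (norm (?m2 - ?m))\<^sup>2"
    by simp
  have "?mn / 2 * (norm (?m1 - ?m2))\<^sup>2 = ?mn * ((norm (?m1 - ?m2))\<^sup>2 / 2)" by simp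
  also have "\<dots> \<le> ?mn * ((norm (?m1 - ?m))\<^sup>2 + (norm (?m2 - ?m))\<^sup>2)"
    by (intro mult_left_mono half) simp
  also have "\<dots> \<le> real (v-u) * (norm (?m1 - ?m))\<^sup>2 + real (w-v) * (norm (?m2 - ?m))\<^sup>2"
    unfolding distrib_left by (intro add_mono mult_right_mono) auto
  finally show ?thesis using gain by simp
qed

lemma seg_bounds_list_update:
  assumes "1 \<le> j" "j \<le> length ls"
  shows "seg_bounds N (ls[j-1 := t]) = (seg_bounds N ls)[j := t]"
  using assms by (cases j) (auto simp: seg_bounds_def list_update_append1)

lemma sorted_wrt_less_list_update:
  assumes sorted: "sorted_wrt (<) (b::nat list)" and j: "1 \<le> j" "j + 1 < length b"
    and t: "b!(j-1) < t" "t < b!(j+1)"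
  shows "sorted_wrt (<) (b[j := t])"
  unfolding sorted_wrt_iff_nth_less
proof (intro allI impI)
  have less: "\<And>i i'. i < i' \<Longrightarrow> i' < length b \<Longrightarrow> b!i < b!i'"
    using sorted by (simp add: sorted_wrt_iff_nth_less)
  then have le: "\<And>i i'. i \<le> i' \<Longrightarrow> i' < length b \<Longrightarrow> b!i \<le> b!i'"
    by (metis le_eq_less_or_eq less_imp_le)
  fix i i' assume i: "i < i'" "i' < length (b[j := t])"
  consider "i = j" | "i' = j" | "i \<noteq> j" "i' \<noteq> j" by blast
  then show "b[j := t] ! i < b[j := t] ! i'"
  proof cases
    case 1
    then have "b!(j+1) \<le> b!i'" using le i by simp
    then show ?thesis using 1 i t by (simp add: nth_list_update)
  next
    case 2
    then have "b!i \<le> b!(j-1)" using le i j by simp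
    then show ?thesis using 2 i t by (simp add: nth_list_update)
  qed (use i less in \<open>simp add: nth_list_update\<close>)
qed

lemma sum_two_support:
  fixes g :: "nat \<Rightarrow> 'a::comm_monoid_add"
  assumes "1 \<le> j" "j < n" "\<And>i. i \<noteq> j - 1 \<Longrightarrow> i \<noteq> j \<Longrightarrow> g i = 0"
  shows "(\<Sum>i<n. g i) = g (j-1) + g j"
proof -
  have "(\<Sum>i<n. g i) = (\<Sum>i\<in>{j-1, j}. g i)"
    using assms by (intro sum.mono_neutral_right) auto
  also have "\<dots> = g (j-1) + g j" using assms by simp
  finally show ?thesis .
qed

lemma
  assumes valid: "valid_seg N K ls" and j: "1 \<le> j" "j \<le> length ls"
    and b: "b = seg_bounds N ls" and t: "b!(j-1) < t" "t < b!(j+1)"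
  shows valid_seg_move_boundary: "valid_seg N K (ls[j-1 := t])"
    and seg_cost_move_boundary: "seg_cost x N (ls[j-1 := t]) = seg_cost x N ls
        + (loss_q x (b!(j-1)+1) t + loss_q x (t+1) (b!(j+1)))
        - (loss_q x (b!(j-1)+1) (b!j) + loss_q x (b!j+1) (b!(j+1)))"
proof -
  have len: "length b = length ls + 2" using b by (simp add: seg_bounds_def)
  have bounds: "seg_bounds N (ls[j-1 := t]) = b[j := t]" using seg_bounds_list_update[OF j] b by simp
  show "valid_seg N K (ls[j-1 := t])"
    using valid len j b t sorted_wrt_less_list_update[of b j t]
    unfolding valid_seg_def bounds by simp
  let ?g = "\<lambda>i. loss_q x (b[j := t]!i + 1) (b[j := t]!(i+1)) - loss_q x (b!i + 1) (b!(i+1))"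
  have "seg_cost x N (ls[j-1 := t]) - seg_cost x N ls = (\<Sum>i<length ls + 1. ?g i)"
    unfolding seg_cost_def Let_def bounds b[symmetric] by (simp add: sum_subtractf)
  also have "\<dots> = ?g (j-1) + ?g j"
    by (rule sum_two_support) (use j len in \<open>auto simp: nth_list_update\<close>)
  finally show "seg_cost x N (ls[j-1 := t]) = seg_cost x N ls
        + (loss_q x (b!(j-1)+1) t + loss_q x (t+1) (b!(j+1)))
        - (loss_q x (b!(j-1)+1) (b!j) + loss_q x (b!j+1) (b!(j+1)))"
    using j len by (simp add: nth_list_update)
qed

lemma is_minimizer_move_boundary:
  assumes min: "is_minimizer x N K ls" and j: "1 \<le> j" "j \<le> length ls"
    and b: "b = seg_bounds N ls" and t: "b!(j-1) < t" "t < b!(j+1)"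
  shows "loss_q x (b!(j-1)+1) (b!j) + loss_q x (b!j+1) (b!(j+1))
      \<le> loss_q x (b!(j-1)+1) t + loss_q x (t+1) (b!(j+1))"
proof -
  have "valid_seg N K ls" using min by (simp add: is_minimizer_def)
  then have "seg_cost x N ls \<le> seg_cost x N (ls[j-1 := t])"
    using min valid_seg_move_boundary[OF _ j b t] by (simp add: is_minimizer_def)
  then show ?thesis
    using seg_cost_move_boundary[OF \<open>valid_seg N K ls\<close> j b t, of x] by simp
qed

lemma alg_output_is_minimizer:
  assumes "alg_output Mmax f \<beta> x N ls"
  shows "ls = [] \<or> (\<exists>K. is_minimizer x N K ls)"
proof -
  from assms obtain s where s: "\<forall>k\<le>Mmax. is_minimizer x N k (s k)"
    and out: "let stop = {k. k \<le> Mmax \<and> real (min_seg_size N (s k)) < \<beta> N} in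
         if stop \<noteq> {} \<and> Min stop = 0 then ls = []
         else (let M = (if stop = {} then Mmax else Min stop - 1) in
               \<exists>Mh. is_arg_min (\<lambda>k. seg_cost x N (s k) + real k * f N) (\<lambda>k. k \<le> M) Mh
                     \<and> ls = s Mh)"
    unfolding alg_output_def by blast
  define stop where "stop = {k. k \<le> Mmax \<and> real (min_seg_size N (s k)) < \<beta> N}"
  define M where "M = (if stop = {} then Mmax else Min stop - 1)"
  have "M \<le> Mmax"
  proof (cases "stop = {}")
    case False
    then have "Min stop \<in> stop" unfolding stop_def by (intro Min_in) auto
    then show ?thesis unfolding M_def stop_def by auto
  qed (simp add: M_def)
  show ?thesis
  proof (cases "stop \<noteq> {} \<and> Min stop = 0")
    case False
    with out obtain Mh where "Mh \<le> M" "ls = s Mh"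
      unfolding stop_def[symmetric] M_def[symmetric] Let_def by (auto simp: is_arg_min_def)
    then have "is_minimizer x N Mh ls" using s \<open>M \<le> Mmax\<close> by auto
    then show ?thesis by blast
  qed (use out in \<open>simp add: stop_def Let_def\<close>)
qed

lemma split_gain_le_common_center:
  fixes x :: "nat \<Rightarrow> 'a::real_inner"
  assumes "u < v" "v < w"
    and "(norm (block_mean x (u+1) v - c))\<^sup>2 \<le> 4 * \<Lambda> / real (v-u)"
    and "(norm (block_mean x (v+1) w - c))\<^sup>2 \<le> 4 * \<Lambda> / real (w-v)"
  shows "split_gain x u v w \<le> 8 * \<Lambda>"
proof -
  have scaled: "real n * (norm e)\<^sup>2 \<le> 4 * \<Lambda>" if "(norm e)\<^sup>2 \<le> 4 * \<Lambda> / real n" "n > 0"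
    for n and e :: 'a
    using that by (simp add: pos_le_divide_eq mult.commute)
  show ?thesis
    using split_gain_le[OF assms(1,2), of x c] scaled[OF assms(3)] scaled[OF assms(4)] assms(1,2)
    by simp
qed

lemma norm_lt_quarter:
  fixes e :: "'a::real_normed_vector"
  assumes dev: "(norm e)\<^sup>2 \<le> 4 * \<Lambda> / n" and n: "n > 250 * \<Lambda> / \<Delta>\<^sup>2" and "\<Lambda> > 0" "\<Delta> > 0"
  shows "norm e < \<Delta> / 4"
proof -
  have "n > 0" using n assms(3,4) by (smt (verit) divide_pos_pos zero_less_power)
  moreover have "64 * \<Lambda> < \<Delta>\<^sup>2 * n"
    using n assms(3,4) by (simp add: pos_divide_less_eq mult.commute)
  moreover have "(norm e)\<^sup>2 * n \<le> 4 * \<Lambda>"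
    using dev \<open>n > 0\<close> by (simp add: pos_le_divide_eq)
  ultimately have "(16 * (norm e)\<^sup>2) * n < \<Delta>\<^sup>2 * n" by (simp only: mult.assoc)
  then have "16 * (norm e)\<^sup>2 < \<Delta>\<^sup>2"
    by (rule mult_right_less_imp_less) (use \<open>n > 0\<close> in simp)
  then have "(norm e)\<^sup>2 < (\<Delta> / 4)\<^sup>2" by (simp add: power_divide)
  then show ?thesis by (rule power_less_imp_less_base) (use assms(4) in simp)
qed

lemma split_gain_gt_at_change:
  fixes x :: "nat \<Rightarrow> 'a::real_inner"
  assumes uvw: "u < v" "v < w"
    and dev1: "(norm (block_mean x (u+1) v - c1))\<^sup>2 \<le> 4 * \<Lambda> / real (v-u)"
    and dev2: "(norm (block_mean x (v+1) w - c2))\<^sup>2 \<le> 4 * \<Lambda> / real (w-v)"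
    and "c1 \<noteq> c2" "\<Lambda> > 0"
    and long: "real (min (v-u) (w-v)) > 250 * \<Lambda> / (norm (c1 - c2))\<^sup>2"
  shows "split_gain x u v w > 8 * \<Lambda>"
proof -
  let ?\<Delta> = "norm (c1 - c2)" and ?m1 = "block_mean x (u+1) v" and ?m2 = "block_mean x (v+1) w"
  let ?mn = "real (min (v-u) (w-v))"
  have \<Delta>: "?\<Delta> > 0" using \<open>c1 \<noteq> c2\<close> by simp
  have "real (v-u) > 250 * \<Lambda> / ?\<Delta>\<^sup>2" "real (w-v) > 250 * \<Lambda> / ?\<Delta>\<^sup>2" using long by simp_all
  then have "norm (?m1 - c1) < ?\<Delta> / 4" "norm (?m2 - c2) < ?\<Delta> / 4"
    using norm_lt_quarter[OF dev1 _ \<open>\<Lambda> > 0\<close> \<Delta>] norm_lt_quarter[OF dev2 _ \<open>\<Lambda> > 0\<close> \<Delta>] by blast+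
  moreover have "?\<Delta> \<le> norm (c1 - ?m1) + norm (?m1 - ?m2) + norm (?m2 - c2)"
    using norm_triangle_ineq[of "c1 - ?m1" "?m1 - ?m2"] norm_triangle_ineq[of "c1 - ?m2" "?m2 - c2"]
    by simp
  ultimately have "?\<Delta> / 2 < norm (?m1 - ?m2)" by (simp add: norm_minus_commute)
  then have sq: "?\<Delta>\<^sup>2 / 4 < (norm (?m1 - ?m2))\<^sup>2"
    using \<Delta> power_strict_mono[of "?\<Delta> / 2" "norm (?m1 - ?m2)" 2] by (simp add: power_divide)
  have "8 * \<Lambda> < 250 * \<Lambda> / ?\<Delta>\<^sup>2 * ?\<Delta>\<^sup>2 / 8" using \<Delta> \<open>\<Lambda> > 0\<close> by simp
  also have "\<dots> \<le> ?mn * ?\<Delta>\<^sup>2 / 8" using long by (intro divide_right_mono mult_right_mono) auto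
  also have "\<dots> \<le> ?mn / 2 * (norm (?m1 - ?m2))\<^sup>2" using sq uvw by simp
  also have "\<dots> \<le> split_gain x u v w" by (rule split_gain_ge[OF uvw])
  finally show ?thesis .
qed

lemma block_mean_component:
  fixes x :: "nat \<Rightarrow> real ^ 'd"
  assumes "n \<ge> 1"
  shows "block_mean x (p+1) (p+n) $ d = (1 / real n) * (\<Sum>i<n. x (p+1+i) $ d)"
proof -
  have "(\<Sum>m=p+1..p+n. x m $ d) = (\<Sum>i<n. x (p+1+i) $ d)"
    using sum.shift_bounds_nat_ivl[of "\<lambda>m. x m $ d" 0 "p+1" n]
    by (simp add: atLeastLessThanSuc_atLeastAtMost lessThan_atLeast0 add.commute)
  then show ?thesis by (simp add: block_mean_def sum_component)
qed

lemma norm_sq_le_of_components: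
  fixes e :: "real ^ 'd"
  assumes "\<And>d. \<bar>e $ d\<bar> < s"
  shows "(norm e)\<^sup>2 \<le> real CARD('d) * s\<^sup>2"
proof -
  have "(norm e)\<^sup>2 = (\<Sum>d\<in>UNIV. (e $ d)\<^sup>2)"
    unfolding power2_norm_eq_inner inner_vec_def by (simp add: power2_eq_square)
  also have "\<dots> \<le> (\<Sum>d\<in>(UNIV::'d set). s\<^sup>2)"
  proof (rule sum_mono)
    fix d
    have "\<bar>e $ d\<bar>\<^sup>2 \<le> s\<^sup>2" using assms[of d] by (intro power_mono) auto
    then show "(e $ d)\<^sup>2 \<le> s\<^sup>2" by simp
  qed
  finally show ?thesis by simp
qed

definition means_concentrated ::
  "(nat \<Rightarrow> nat) \<Rightarrow> nat \<Rightarrow> (nat \<Rightarrow> real ^ 'd) \<Rightarrow> real \<Rightarrow> nat \<Rightarrow> (nat \<Rightarrow> real ^ 'd) \<Rightarrow> bool" where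
  "means_concentrated L M0 mu c0 N x \<longleftrightarrow>
     (\<forall>k\<in>{1..M0+1}. \<forall>p n d. L (k-1) \<le> p \<longrightarrow> p+n \<le> L k \<longrightarrow> p+n \<le> N \<longrightarrow> 1 \<le> n \<longrightarrow>
        \<bar>(1 / real n) * (\<Sum>i<n. x (p+1+i) $ d) - mu k $ d\<bar> < sqrt (4 * ln (real N) / (c0 * real n)))"

lemma means_concentrated_block_mean:
  fixes x :: "nat \<Rightarrow> real ^ 'd"
  assumes conc: "means_concentrated L M0 mu c0 N x" and k: "k \<in> {1..M0+1}"
    and p: "L (k-1) \<le> p" "p < p'" "p' \<le> L k" "p' \<le> N" and "c0 > 0" "N \<ge> 1"
  shows "(norm (block_mean x (p+1) p' - mu k))\<^sup>2 \<le> 4 * (real CARD('d) * ln (real N) / c0) / real (p'-p)"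
proof -
  define n where "n = p' - p"
  have n: "n \<ge> 1" "p' = p + n" using p by (auto simp: n_def)
  define s where "s = sqrt (4 * ln (real N) / (c0 * real n))"
  have "\<bar>(1 / real n) * (\<Sum>i<n. x (p+1+i) $ d) - mu k $ d\<bar> < s" for d
    using conc k p n unfolding means_concentrated_def s_def by blast
  then have "\<bar>(block_mean x (p+1) p' - mu k) $ d\<bar> < s" for d
    using block_mean_component[OF n(1), of x p d] n(2) by simp
  then have "(norm (block_mean x (p+1) p' - mu k))\<^sup>2 \<le> real CARD('d) * s\<^sup>2"
    by (rule norm_sq_le_of_components)
  also have "s\<^sup>2 = 4 * ln (real N) / (c0 * real n)"
    unfolding s_def using assms n by (intro real_sqrt_pow2) auto
  finally show ?thesis unfolding n_def[symmetric] by (simp add: field_simps)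
qed

lemma change_points_mono:
  assumes "\<forall>k\<le>M0. (L::nat \<Rightarrow> nat) k < L (k+1)" "a \<le> b" "b \<le> M0+1"
  shows "L a \<le> L b"
  using assms(2,3)
proof (induction b)
  case (Suc b)
  show ?case
  proof (cases "a = Suc b")
    case False
    then have "L a \<le> L b" using Suc by simp
    also have "L b < L (Suc b)" using assms(1) Suc by simp
    finally show ?thesis by simp
  qed simp
qed simp

lemma alg_output_not_event_F:
  fixes x :: "nat \<Rightarrow> real ^ 'd"
  assumes conc: "means_concentrated L M0 mu c0 N x"
    and inc: "\<forall>k\<le>M0. L k < L (k+1)" and LN: "L (M0+1) = N"
    and k: "k \<in> {1..M0}" and ne: "mu k \<noteq> mu (k+1)" and c0: "c0 > 0" and N: "N \<ge> 2"
    and out: "alg_output Mmax f \<beta> x N ls"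
  shows "\<not> event_F L k (250 * real CARD('d) * ln (real N) / (c0 * (norm (mu k - mu (k+1)))\<^sup>2)) N ls"
proof
  define \<Lambda> where "\<Lambda> = real CARD('d) * ln (real N) / c0"
  have "\<Lambda> > 0" unfolding \<Lambda>_def using c0 N by (simp add: ln_gt_zero)
  have threshold: "250 * real CARD('d) * ln (real N) / (c0 * (norm (mu k - mu (k+1)))\<^sup>2)
      = 250 * \<Lambda> / (norm (mu k - mu (k+1)))\<^sup>2" unfolding \<Lambda>_def by (simp add: field_simps)
  assume "event_F L k (250 * real CARD('d) * ln (real N) / (c0 * (norm (mu k - mu (k+1)))\<^sup>2)) N ls"
  then obtain j n1 n2 n3 where j: "1 \<le> j" "j \<le> length ls"
    and n: "1 \<le> n1" "n1 < n2" "n2 < L k - L (k-1)" "1 \<le> n3" "n3 \<le> L (k+1) - L k"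
    and b: "seg_bounds N ls ! (j-1) = L (k-1) + n1" "seg_bounds N ls ! j = L (k-1) + n2"
      "seg_bounds N ls ! (j+1) = L k + n3"
    and long: "real (min (L k - L (k-1) - n2) n3) > 250 * \<Lambda> / (norm (mu k - mu (k+1)))\<^sup>2"
    unfolding event_F_def Let_def threshold by blast
  obtain K where min: "is_minimizer x N K ls"
    using alg_output_is_minimizer[OF out] j by auto
  define u v t w where "u = L (k-1) + n1" and "v = L (k-1) + n2" and "t = L k" and "w = L k + n3"
  have "L (k-1) < L k" using inc[rule_format, of "k-1"] k by auto
  then have order: "u < v" "v < t" "t < w" using n by (auto simp: u_def v_def t_def w_def)
  have "L k \<le> N" "L (k+1) \<le> N"
    using change_points_mono[OF inc, of k "M0+1"] change_points_mono[OF inc, of "k+1" "M0+1"] k LN by auto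
  have dev1: "(norm (block_mean x (u+1) v - mu k))\<^sup>2 \<le> 4 * \<Lambda> / real (v-u)"
    unfolding \<Lambda>_def by (rule means_concentrated_block_mean[OF conc])
      (use k order c0 N \<open>L k \<le> N\<close> in \<open>auto simp: u_def t_def\<close>)
  have dev2: "(norm (block_mean x (v+1) t - mu k))\<^sup>2 \<le> 4 * \<Lambda> / real (t-v)"
    unfolding \<Lambda>_def by (rule means_concentrated_block_mean[OF conc])
      (use k order c0 N \<open>L k \<le> N\<close> in \<open>auto simp: v_def t_def\<close>)
  have dev3: "(norm (block_mean x (t+1) w - mu (k+1)))\<^sup>2 \<le> 4 * \<Lambda> / real (w-t)"
    unfolding \<Lambda>_def by (rule means_concentrated_block_mean[OF conc])
      (use k order c0 N n \<open>L (k+1) \<le> N\<close> in \<open>auto simp: t_def w_def\<close>)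
  have "split_gain x u v t \<le> 8 * \<Lambda>"
    by (rule split_gain_le_common_center[OF order(1,2) dev1 dev2])
  moreover have "min (t - v) (w - t) = min (L k - L (k-1) - n2) n3"
    by (simp add: t_def v_def w_def)
  then have "split_gain x v t w > 8 * \<Lambda>"
    using split_gain_gt_at_change[OF order(2,3) dev2 dev3 ne \<open>\<Lambda> > 0\<close>] long by simp
  moreover have "loss_q x (u+1) v + loss_q x (v+1) w \<le> loss_q x (u+1) t + loss_q x (t+1) w"
    using is_minimizer_move_boundary[OF min j refl, of t] b order by (simp add: u_def v_def w_def)
  ultimately show False unfolding split_gain_def by linarith
qed

lemma alg_output_not_event_F':
  fixes x :: "nat \<Rightarrow> real ^ 'd"
  assumes conc: "means_concentrated L M0 mu c0 N x"
    and inc: "\<forall>k\<le>M0. L k < L (k+1)" and LN: "L (M0+1) = N"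
    and k: "k \<in> {2..M0+1}" and ne: "mu (k-1) \<noteq> mu k" and c0: "c0 > 0" and N: "N \<ge> 2"
    and out: "alg_output Mmax f \<beta> x N ls"
  shows "\<not> event_F' L k (250 * real CARD('d) * ln (real N) / (c0 * (norm (mu (k-1) - mu k))\<^sup>2)) N ls"
proof
  define \<Lambda> where "\<Lambda> = real CARD('d) * ln (real N) / c0"
  have "\<Lambda> > 0" unfolding \<Lambda>_def using c0 N by (simp add: ln_gt_zero)
  have threshold: "250 * real CARD('d) * ln (real N) / (c0 * (norm (mu (k-1) - mu k))\<^sup>2)
      = 250 * \<Lambda> / (norm (mu (k-1) - mu k))\<^sup>2" unfolding \<Lambda>_def by (simp add: field_simps)
  assume "event_F' L k (250 * real CARD('d) * ln (real N) / (c0 * (norm (mu (k-1) - mu k))\<^sup>2)) N ls"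
  then obtain j n1 n2 n3 where j: "1 \<le> j" "j \<le> length ls"
    and n: "1 \<le> n1" "n1 < n2" "n2 < L k - L (k-1)" "1 \<le> n3" "n3 \<le> L (k-1) - L (k-2)"
    and b: "seg_bounds N ls ! (j-1) = L (k-1) - n3" "seg_bounds N ls ! j = L (k-1) + n1"
      "seg_bounds N ls ! (j+1) = L (k-1) + n2"
    and long: "real (min n1 n3) > 250 * \<Lambda> / (norm (mu (k-1) - mu k))\<^sup>2"
    unfolding event_F'_def Let_def threshold by blast
  obtain K where min: "is_minimizer x N K ls"
    using alg_output_is_minimizer[OF out] j by auto
  define u t v w where "u = L (k-1) - n3" and "t = L (k-1)" and "v = L (k-1) + n1" and "w = L (k-1) + n2"
  have order: "u < t" "t < v" "v < w" "w < L k" "L (k-1-1) \<le> u"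
    using n by (auto simp: u_def t_def v_def w_def numeral_2_eq_2)
  have "L k \<le> N" using change_points_mono[OF inc, of k "M0+1"] k LN by auto
  have dev1: "(norm (block_mean x (u+1) t - mu (k-1)))\<^sup>2 \<le> 4 * \<Lambda> / real (t-u)"
    unfolding \<Lambda>_def by (rule means_concentrated_block_mean[OF conc])
      (use k order c0 N \<open>L k \<le> N\<close> in \<open>auto simp: t_def\<close>)
  have dev2: "(norm (block_mean x (t+1) v - mu k))\<^sup>2 \<le> 4 * \<Lambda> / real (v-t)"
    unfolding \<Lambda>_def by (rule means_concentrated_block_mean[OF conc])
      (use k order c0 N \<open>L k \<le> N\<close> in \<open>auto simp: t_def\<close>)
  have dev3: "(norm (block_mean x (v+1) w - mu k))\<^sup>2 \<le> 4 * \<Lambda> / real (w-v)"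
    unfolding \<Lambda>_def by (rule means_concentrated_block_mean[OF conc])
      (use k order c0 N \<open>L k \<le> N\<close> in \<open>auto simp: t_def v_def\<close>)
  have "split_gain x t v w \<le> 8 * \<Lambda>"
    by (rule split_gain_le_common_center[OF order(2,3) dev2 dev3])
  moreover have "min (t - u) (v - t) = min n1 n3"
    using n by (simp add: u_def t_def v_def)
  then have "split_gain x u t v > 8 * \<Lambda>"
    using split_gain_gt_at_change[OF order(1,2) dev1 dev2 ne \<open>\<Lambda> > 0\<close>] long by simp
  moreover have "loss_q x (u+1) v + loss_q x (v+1) w \<le> loss_q x (u+1) t + loss_q x (t+1) w"
    using is_minimizer_move_boundary[OF min j refl, of t] b order by (simp add: u_def v_def w_def)
  ultimately show False unfolding split_gain_def by linarith
qed

lemma (in prob_space) indep_sets_reindex: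
  assumes inj: "inj_on f I" and indep: "indep_sets F (f ` I)"
  shows "indep_sets (\<lambda>i. F (f i)) I"
proof (rule indep_setsI)
  show "F (f i) \<subseteq> events" if "i \<in> I" for i
    using indep that unfolding indep_sets_def by auto
  fix A J assume J: "J \<noteq> {}" "J \<subseteq> I" "finite J" and A: "\<forall>j\<in>J. A j \<in> F (f j)"
  define g where "g = the_inv_into I f"
  have g: "g (f j) = j" if "j \<in> J" for j
    unfolding g_def using the_inv_into_f_f[OF inj] J that by auto
  have "prob (\<Inter>j'\<in>f ` J. A (g j')) = (\<Prod>j'\<in>f ` J. prob (A (g j')))"
    by (rule indep_setsD[OF indep]) (use J A g in auto)
  then show "prob (\<Inter>j\<in>J. A j) = (\<Prod>j\<in>J. prob (A j))"
    using g inj_on_subset[OF inj J(2)] by (simp add: prod.reindex cong: INF_cong prod.cong)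
qed

lemma (in prob_space) indep_vars_reindex:
  assumes "inj_on f I" "indep_vars M' X (f ` I)"
  shows "indep_vars (\<lambda>i. M' (f i)) (\<lambda>i. X (f i)) I"
  using assms indep_sets_reindex[OF assms(1), of "\<lambda>i. {X i -` A \<inter> space M | A. A \<in> sets (M' i)}"]
  unfolding indep_vars_def2 by auto

lemma (in prob_space) distr_block_eq_PiM:
  fixes X :: "nat \<Rightarrow> 'a \<Rightarrow> real ^ 'd"
  assumes ind: "indep_vars (\<lambda>_. borel) X {1..N}" and n: "1 \<le> n" "p+n \<le> N"
    and rv: "\<forall>i<n. X (p+1+i) \<in> borel_measurable M \<and> distr M borel (X (p+1+i)) = Gk"
  shows "distr M (PiM {..<n} (\<lambda>_. borel)) (\<lambda>\<omega>. \<lambda>i\<in>{..<n}. X (p+1+i) \<omega>) = PiM {..<n} (\<lambda>_. Gk)"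
proof -
  have img: "(\<lambda>i. p+1+i) ` {..<n} \<subseteq> {1..N}" using n by auto
  have inj: "inj_on (\<lambda>i. p+1+i) {..<n}" by (auto simp: inj_on_def)
  have "indep_vars (\<lambda>_. borel) X ((\<lambda>i. p+1+i) ` {..<n})"
    by (rule indep_vars_subset[OF ind img])
  then have indep_block: "indep_vars (\<lambda>_. borel) (\<lambda>i. X (p+1+i)) {..<n}"
    using indep_vars_reindex[OF inj] by fastforce
  have ne: "{..<n} \<noteq> {}" using n lessThan_empty_iff[of n] by simp
  have "distr M (PiM {..<n} (\<lambda>_. borel)) (\<lambda>\<omega>. \<lambda>i\<in>{..<n}. X (p+1+i) \<omega>)
      = PiM {..<n} (\<lambda>i. distr M borel (X (p+1+i)))"
    using indep_vars_iff_distr_eq_PiM'[OF ne, where M'="\<lambda>_. borel" and X="\<lambda>i. X (p+1+i)"] rv indep_block by auto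
  also have "\<dots> = PiM {..<n} (\<lambda>_. Gk)"
    using rv by (intro PiM_cong) auto
  finally show ?thesis .
qed

lemma (in prob_space) prob_block_mean_dev_le:
  fixes X :: "nat \<Rightarrow> 'a \<Rightarrow> real ^ 'd"
  assumes ind: "indep_vars (\<lambda>_. borel) X {1..N}" and n: "1 \<le> n" "p+n \<le> N"
    and rv: "\<forall>i<n. X (p+1+i) \<in> borel_measurable M \<and> distr M borel (X (p+1+i)) = Gk"
    and sg: "measure (PiM {..<n} (\<lambda>_. Gk))
           {z \<in> space (PiM {..<n} (\<lambda>_. Gk)). \<bar>(1 / real n) * (\<Sum>i<n. z i $ d) - c\<bar> \<ge> a} \<le> B"
  shows "{\<omega> \<in> space M. \<bar>(1 / real n) * (\<Sum>i<n. X (p+1+i) \<omega> $ d) - c\<bar> \<ge> a} \<in> events"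
    "measure M {\<omega> \<in> space M. \<bar>(1 / real n) * (\<Sum>i<n. X (p+1+i) \<omega> $ d) - c\<bar> \<ge> a} \<le> B"
proof -
  let ?P = "PiM {..<n} (\<lambda>_. borel :: (real ^ 'd) measure)"
  let ?Y = "\<lambda>\<omega>. \<lambda>i\<in>{..<n}. X (p+1+i) \<omega>"
  let ?S = "{z \<in> space ?P. \<bar>(1 / real n) * (\<Sum>i<n. z i $ d) - c\<bar> \<ge> a}"
  have Gk: "Gk = distr M borel (X (p+1))" using rv n by auto
  have "sets Gk = sets borel" using Gk by simp
  then have "sets (PiM {..<n} (\<lambda>_. Gk)) = sets ?P" by (intro sets_PiM_cong) auto
  then have space_eq: "space (PiM {..<n} (\<lambda>_. Gk)) = space ?P" by (rule sets_eq_imp_space_eq)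
  have Ymeas: "?Y \<in> measurable M ?P"
    using rv by (intro measurable_restrict) auto
  have comp: "(\<lambda>z. z i $ d) \<in> borel_measurable ?P" if "i \<in> {..<n}" for i
    by (rule measurable_compose[OF measurable_component_singleton[OF that] borel_measurable_nth])
  have f: "(\<lambda>z. \<bar>(1 / real n) * (\<Sum>i<n. z i $ d) - c\<bar>) \<in> borel_measurable ?P"
    using comp by (intro borel_measurable_abs borel_measurable_diff borel_measurable_times
        borel_measurable_sum measurable_const) auto
  have Smeas: "?S \<in> sets ?P"
    using f by measurable
  have pre: "?Y -` ?S \<inter> space M = {\<omega> \<in> space M. \<bar>(1 / real n) * (\<Sum>i<n. X (p+1+i) \<omega> $ d) - c\<bar> \<ge> a}"
    using measurable_space[OF Ymeas] by auto
  show "{\<omega> \<in> space M. \<bar>(1 / real n) * (\<Sum>i<n. X (p+1+i) \<omega> $ d) - c\<bar> \<ge> a} \<in> events"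
    unfolding pre[symmetric] using Ymeas Smeas by (rule measurable_sets)
  have "measure M {\<omega> \<in> space M. \<bar>(1 / real n) * (\<Sum>i<n. X (p+1+i) \<omega> $ d) - c\<bar> \<ge> a}
      = measure (distr M ?P ?Y) ?S"
    unfolding pre[symmetric] by (rule measure_distr[OF Ymeas Smeas, symmetric])
  also have "\<dots> = measure (PiM {..<n} (\<lambda>_. Gk)) ?S"
    using distr_block_eq_PiM[OF ind n rv] by simp
  also have "?S = {z \<in> space (PiM {..<n} (\<lambda>_. Gk)). \<bar>(1 / real n) * (\<Sum>i<n. z i $ d) - c\<bar> \<ge> a}"
    using space_eq by simp
  finally show "measure M {\<omega> \<in> space M. \<bar>(1 / real n) * (\<Sum>i<n. X (p+1+i) \<omega> $ d) - c\<bar> \<ge> a} \<le> B"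
    using sg by simp
qed

lemma (in prob_space) prob_block_mean_far:
  fixes X :: "nat \<Rightarrow> nat \<Rightarrow> 'a \<Rightarrow> real ^ 'd" and L :: "nat \<Rightarrow> nat \<Rightarrow> nat"
    and G :: "nat \<Rightarrow> (real ^ 'd) measure" and mu :: "nat \<Rightarrow> real ^ 'd"
  assumes indep: "indep_vars (\<lambda>_. borel) (X N) {1..N}"
    and distr: "\<forall>N k n. k \<in> {1..M0+1} \<longrightarrow> L N (k-1) < n \<longrightarrow> n \<le> L N k \<longrightarrow>
                   X N n \<in> borel_measurable M \<and> distr M borel (X N n) = G k"
    and c0: "c0 > 0"
    and subgauss: "\<forall>k\<in>{1..M0+1}. \<forall>d. \<forall>n\<ge>1. \<forall>a>0.
         measure (PiM {..<n} (\<lambda>_. G k))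
           {z \<in> space (PiM {..<n} (\<lambda>_. G k)).
              \<bar>(1 / real n) * (\<Sum>i<n. z i $ d) - mu k $ d\<bar> \<ge> a}
         \<le> 2 * exp (- c0 * a\<^sup>2 * real n)"
    and N: "N \<ge> 2" and k: "k \<in> {1..M0+1}"
    and block: "L N (k-1) \<le> p" "p+n \<le> L N k" "p+n \<le> N" "1 \<le> n"
  shows "{\<omega> \<in> space M. \<bar>(1 / real n) * (\<Sum>i<n. X N (p+1+i) \<omega> $ d) - mu k $ d\<bar>
            \<ge> sqrt (4 * ln (real N) / (c0 * real n))} \<in> events"
    and "measure M {\<omega> \<in> space M. \<bar>(1 / real n) * (\<Sum>i<n. X N (p+1+i) \<omega> $ d) - mu k $ d\<bar>
            \<ge> sqrt (4 * ln (real N) / (c0 * real n))} \<le> 2 / real N ^ 4"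
proof -
  define a where "a = sqrt (4 * ln (real N) / (c0 * real n))"
  have "ln (real N) > 0" using N by simp
  then have "a > 0" and a_sq: "a\<^sup>2 = 4 * ln (real N) / (c0 * real n)"
    unfolding a_def using c0 block(4) by (auto intro: real_sqrt_pow2)
  have "exp (- c0 * a\<^sup>2 * real n) = exp (- (4 * ln (real N)))"
    unfolding a_sq using c0 block(4) by (simp add: field_simps)
  also have "4 * ln (real N) = ln (real N ^ 4)"
    using N by (simp add: ln_realpow)
  also have "exp (- ln (real N ^ 4)) = 1 / real N ^ 4"
    using N by (simp add: exp_minus inverse_eq_divide)
  finally have "measure (PiM {..<n} (\<lambda>_. G k))
           {z \<in> space (PiM {..<n} (\<lambda>_. G k)). \<bar>(1 / real n) * (\<Sum>i<n. z i $ d) - mu k $ d\<bar> \<ge> a}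
         \<le> 2 / real N ^ 4"
    using subgauss k block(4) \<open>a > 0\<close> by fastforce
  moreover have "\<forall>i<n. X N (p+1+i) \<in> borel_measurable M \<and> distr M borel (X N (p+1+i)) = G k"
    using distr k block by auto
  ultimately show "{\<omega> \<in> space M. \<bar>(1 / real n) * (\<Sum>i<n. X N (p+1+i) \<omega> $ d) - mu k $ d\<bar>
            \<ge> sqrt (4 * ln (real N) / (c0 * real n))} \<in> events"
    and "measure M {\<omega> \<in> space M. \<bar>(1 / real n) * (\<Sum>i<n. X N (p+1+i) \<omega> $ d) - mu k $ d\<bar>
            \<ge> sqrt (4 * ln (real N) / (c0 * real n))} \<le> 2 / real N ^ 4"
    using prob_block_mean_dev_le[OF indep block(4,3)] unfolding a_def by blast+
qed

lemma (in prob_space) AE_eventually_means_concentrated: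
  fixes X :: "nat \<Rightarrow> nat \<Rightarrow> 'a \<Rightarrow> real ^ 'd" and L :: "nat \<Rightarrow> nat \<Rightarrow> nat"
    and G :: "nat \<Rightarrow> (real ^ 'd) measure" and mu :: "nat \<Rightarrow> real ^ 'd"
  assumes indep: "\<forall>N. indep_vars (\<lambda>_. borel) (X N) {1..N}"
    and distr: "\<forall>N k n. k \<in> {1..M0+1} \<longrightarrow> L N (k-1) < n \<longrightarrow> n \<le> L N k \<longrightarrow>
                   X N n \<in> borel_measurable M \<and> distr M borel (X N n) = G k"
    and c0: "c0 > 0"
    and subgauss: "\<forall>k\<in>{1..M0+1}. \<forall>d. \<forall>n\<ge>1. \<forall>a>0.
         measure (PiM {..<n} (\<lambda>_. G k))
           {z \<in> space (PiM {..<n} (\<lambda>_. G k)).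
              \<bar>(1 / real n) * (\<Sum>i<n. z i $ d) - mu k $ d\<bar> \<ge> a}
         \<le> 2 * exp (- c0 * a\<^sup>2 * real n)"
  shows "AE \<omega> in M. eventually (\<lambda>N. means_concentrated (L N) M0 mu c0 N (\<lambda>n. X N n \<omega>)) sequentially"
proof -
  define far where "far N = (\<lambda>(k,p,n,d). {\<omega> \<in> space M.
      \<bar>(1 / real n) * (\<Sum>i<n. X N (p+1+i) \<omega> $ d) - mu k $ d\<bar> \<ge> sqrt (4 * ln (real N) / (c0 * real n))})"
    for N
  define Box where "Box N = {1..M0+1} \<times> {..<N} \<times> {1..N} \<times> (UNIV :: 'd set)" for N :: nat
  define Idx where "Idx N = {(k,p,n,d) \<in> Box N. L N (k-1) \<le> p \<and> p+n \<le> L N k \<and> p+n \<le> N}" for N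
  define A where "A N = (if N \<ge> 2 then \<Union>i\<in>Idx N. far N i else {})" for N
  have finite: "finite (Idx N)" for N
    unfolding Idx_def by (rule finite_subset[of _ "Box N"]) (auto simp: Box_def)
  have far: "far N i \<in> events \<and> measure M (far N i) \<le> 2 / real N ^ 4"
    if N: "N \<ge> 2" and i: "i \<in> Idx N" for N i
  proof -
    obtain k p n d where i_eq: "i = (k,p,n,d)" by (cases i) auto
    have "k \<in> {1..M0+1}" "L N (k-1) \<le> p" "p+n \<le> L N k" "p+n \<le> N" "1 \<le> n"
      using i unfolding i_eq Idx_def Box_def by simp_all
    note block = this
    show ?thesis unfolding i_eq far_def prod.case
      using prob_block_mean_far[OF spec[OF indep, of N] distr c0 subgauss N block, of d] by (intro conjI)
  qed
  have events: "A N \<in> events" for N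
    unfolding A_def using far finite by (simp add: sets.finite_UN)
  have "measure M (A N) \<le> 2 * real (M0+1) * real CARD('d) * inverse (real N ^ 2)" for N
  proof (cases "N \<ge> 2")
    case True
    have "card (Idx N) \<le> card (Box N)"
      unfolding Idx_def by (intro card_mono) (auto simp: Box_def)
    also have "card (Box N) = (M0+1) * N * N * CARD('d)"
      unfolding Box_def by (simp add: card_cartesian_product algebra_simps)
    finally have card: "real (card (Idx N)) \<le> real ((M0+1) * N * N * CARD('d))" by linarith
    have "measure M (A N) \<le> (\<Sum>i\<in>Idx N. measure M (far N i))"
      unfolding A_def using True far by (simp add: measure_UNION_le[OF finite])
    also have "\<dots> \<le> (\<Sum>i\<in>Idx N. 2 / real N ^ 4)"
      using True far by (intro sum_mono) auto
    also have "\<dots> = real (card (Idx N)) * (2 / real N ^ 4)"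
      by simp
    also have "\<dots> \<le> real ((M0+1) * N * N * CARD('d)) * (2 / real N ^ 4)"
      using card by (intro mult_right_mono) auto
    also have "\<dots> = 2 * real (M0+1) * real CARD('d) * inverse (real N ^ 2)"
      using True by (simp add: field_simps power_def)
    finally show ?thesis .
  qed (simp add: A_def)
  then have "summable (\<lambda>N. measure M (A N))"
    by (intro summable_comparison_test'[where N=0, OF summable_mult[OF inverse_power_summable]]) auto
  then have "AE \<omega> in M. eventually (\<lambda>N. \<omega> \<in> space M - A N) sequentially"
    by (intro borel_cantelli_AE1[OF events]) (simp_all add: emeasure_eq_measure)
  then show ?thesis
  proof (rule AE_mp, intro AE_I2 impI)
    fix \<omega> assume "eventually (\<lambda>N. \<omega> \<in> space M - A N) sequentially"
    with eventually_ge_at_top[of 2]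
    show "eventually (\<lambda>N. means_concentrated (L N) M0 mu c0 N (\<lambda>n. X N n \<omega>)) sequentially"
    proof eventually_elim
      case (elim N)
      show ?case unfolding means_concentrated_def
      proof (intro ballI allI impI)
        fix k p n d assume "k \<in> {1..M0+1}" "L N (k-1) \<le> p" "p+n \<le> L N k" "p+n \<le> N" "1 \<le> n"
        then have "(k,p,n,d) \<in> Idx N" unfolding Idx_def Box_def by auto
        then have "\<omega> \<notin> far N (k,p,n,d)" using elim unfolding A_def by auto
        then show "\<bar>(1 / real n) * (\<Sum>i<n. X N (p+1+i) \<omega> $ d) - mu k $ d\<bar>
            < sqrt (4 * ln (real N) / (c0 * real n))"
          using elim unfolding far_def by auto
      qed
    qed
  qed
qed

theorem lemma8:
  fixes M :: "'w measure"
    and X :: "nat \<Rightarrow> nat \<Rightarrow> 'w \<Rightarrow> real ^ 'd"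
    and L :: "nat \<Rightarrow> nat \<Rightarrow> nat"
    and M0 :: nat
    and G :: "nat \<Rightarrow> (real ^ 'd) measure"
    and mu :: "nat \<Rightarrow> real ^ 'd"
    and c0 :: real
    and Mmax :: nat and f :: "nat \<Rightarrow> real" and \<beta> :: "nat \<Rightarrow> real"
    and out :: "nat \<Rightarrow> (nat \<Rightarrow> real ^ 'd) \<Rightarrow> nat list"
  assumes P: "prob_space M"
    and M0_pos: "M0 > 0"
    and cps: "eventually (\<lambda>N. L N 0 = 0 \<and> L N (M0+1) = N \<and>
                 (\<forall>k\<le>M0. L N k < L N (k+1))) sequentially"
    and seg_inf: "\<forall>k\<in>{1..M0+1}. filterlim (\<lambda>N. L N k - L N (k-1)) at_top sequentially"
    and indep: "\<forall>N. prob_space.indep_vars M (\<lambda>_. borel) (X N) {1..N}"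
    and distr: "\<forall>N k n. k \<in> {1..M0+1} \<longrightarrow> L N (k-1) < n \<longrightarrow> n \<le> L N k \<longrightarrow>
                   X N n \<in> borel_measurable M \<and> distr M borel (X N n) = G k"
    and moments: "\<forall>k\<in>{1..M0+1}. integrable (G k) (\<lambda>x. x) \<and>
                    integrable (G k) (\<lambda>x. (norm x)\<^sup>2)"
    and mu_def: "\<forall>k\<in>{1..M0+1}. mu k = integral\<^sup>L (G k) (\<lambda>x. x)"
    and mu_change: "\<forall>k\<in>{1..M0}. mu k \<noteq> mu (k+1)"
    and c0_pos: "c0 > 0"
    and subgauss: "\<forall>k\<in>{1..M0+1}. \<forall>d. \<forall>n\<ge>1. \<forall>a>0.
         measure (PiM {..<n} (\<lambda>_. G k))
           {z \<in> space (PiM {..<n} (\<lambda>_. G k)).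
              \<bar>(1 / real n) * (\<Sum>i<n. z i $ d) - mu k $ d\<bar> \<ge> a}
         \<le> 2 * exp (- c0 * a\<^sup>2 * real n)"
    and Mmax_pos: "Mmax \<ge> 1"
    and f_pos: "\<forall>N. f N > 0"
    and out_alg: "\<forall>N x. Mmax < N \<longrightarrow> alg_output Mmax f \<beta> x N (out N x)"
  shows
    "(\<forall>k\<in>{1..M0}. AE \<omega> in M. eventually (\<lambda>N. \<not> event_F (L N) k
        (250 * real CARD('d) * ln (real N) / (c0 * (norm (mu k - mu (k+1)))\<^sup>2))
        N (out N (\<lambda>n. X N n \<omega>))) sequentially)
   \<and> (\<forall>k\<in>{2..M0+1}. AE \<omega> in M. eventually (\<lambda>N. \<not> event_F' (L N) k
        (250 * real CARD('d) * ln (real N) / (c0 * (norm (mu (k-1) - mu k))\<^sup>2))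
        N (out N (\<lambda>n. X N n \<omega>))) sequentially)"
proof -
  interpret prob_space M by (rule P)
  have concentrated:
    "AE \<omega> in M. eventually (\<lambda>N. means_concentrated (L N) M0 mu c0 N (\<lambda>n. X N n \<omega>)) sequentially"
    by (rule AE_eventually_means_concentrated[OF indep distr c0_pos subgauss])
  have regular: "eventually (\<lambda>N. L N (M0+1) = N \<and> (\<forall>k\<le>M0. L N k < L N (k+1)) \<and> 2 \<le> N \<and> Mmax < N)
      sequentially"
    using cps eventually_ge_at_top[of 2] eventually_gt_at_top[of Mmax] by eventually_elim auto
  show ?thesis
  proof (intro conjI ballI eventually_mono[OF concentrated], goal_cases)
    case (1 k \<omega>)
    from regular 1(2) show ?case
    proof eventually_elim
      case (elim N)
      show ?case
        by (rule alg_output_not_event_F[OF elim(2)]) (use elim 1(1) mu_change c0_pos out_alg in auto)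
    qed
  next
    case (2 k \<omega>)
    then have "k-1 \<in> {1..M0}" "k-1+1 = k" by auto
    then have "mu (k-1) \<noteq> mu k" using mu_change by metis
    from regular 2(2) show ?case
    proof eventually_elim
      case (elim N)
      show ?case
        by (rule alg_output_not_event_F'[OF elim(2)])
          (use elim 2(1) \<open>mu (k-1) \<noteq> mu k\<close> c0_pos out_alg in auto)
    qed
  qed
qed

end
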